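(* Let $\alpha,\beta,\varepsilon>0$, $r\in\mathbb{N}$, $S\subseteq\mathbb{N}$ an infinite set, $\mathcal{A}=\mathcal{A}(n)$ and $X=X(n)$ graph properties (events in $G(n,p)$), and $p=p(n)$ with $p=\Theta(1/n)$, such that for every $n\in S$, $\Pr[X]>\beta$ and $\Pr[\mathcal{A}\mid X]>\alpha$ (probabilities in $G(n,p)$). For every integer $i\ge 0$ let $B_i$ be the event that the graph on $\{1,\dots,n\}$ satisfies: (1) there are exactly $i$ edges between $\{1,\dots,r\}$ and $\{r+1,\dots,n\}$; (2) there is no edge joining two vertices of $\{1,\dots,r\}$; (3) no vertex of $\{r+1,\dots,n\}$ has more than one neighbour in $\{1,\dots,r\}$. Then there exists $i\ge 0$ such that $\Pr[\mathcal{A}\mid B_i\cap X]>\alpha-\varepsilon$ for infinitely many $n\in S$.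
   Context: $G(n,p)$ denotes the random graph on vertex set $\{1,\dots,n\}$ in which each possible edge appears independently with probability $p=p(n)$. *)

theory Defs
  imports Complex_Main
begin

definition all_edges :: "nat \<Rightarrow> nat set set" where
  "all_edges n = {{u, v} | u v. u \<in> {1..n} \<and> v \<in> {1..n} \<and> u \<noteq> v}"

definition graphs :: "nat \<Rightarrow> nat set set set" where
  "graphs n = Pow (all_edges n)"

definition gnp_prob :: "nat \<Rightarrow> real \<Rightarrow> nat set set set \<Rightarrow> real" where
  "gnp_prob n p Ev = (\<Sum>E \<in> graphs n \<inter> Ev.
      p ^ card E * (1 - p) ^ (card (all_edges n) - card E))"

definition gnp_cond :: "nat \<Rightarrow> real \<Rightarrow> nat set set set \<Rightarrow> nat set set set \<Rightarrow> real" where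
  "gnp_cond n p Ev C = gnp_prob n p (Ev \<inter> C) / gnp_prob n p C"

definition B_event :: "nat \<Rightarrow> nat \<Rightarrow> nat \<Rightarrow> nat set set set" where
  "B_event n r i = {E \<in> graphs n.
      card {e \<in> E. \<exists>u v. e = {u, v} \<and> u \<in> {1..r} \<and> v \<in> {r+1..n}} = i
    \<and> (\<forall>u \<in> {1..r}. \<forall>v \<in> {1..r}. {u, v} \<notin> E)
    \<and> (\<forall>v \<in> {r+1..n}. card {u \<in> {1..r}. {u, v} \<in> E} \<le> 1)}"

end

theory Submission
  imports Defs
begin

(* Let Thin be the event "no edge inside R = {1..r} and every vertex
   outside R has at most one neighbour in R", and Good(K) the part of Thin with at
   most K edges between R and its complement.  Good(K) is the disjoint union of the
   events B_0, ..., B_K.  By the union bound, Pr[not Thin] <= r^2 p + r^2 n p^2, and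
   by Markov's inequality Pr[more than K crossing edges] <= r n p / (K + 1).  With
   p <= c/n, choosing K large and then n large makes Pr[not Good(K)] smaller than any
   fixed delta > 0.  An averaging argument (a convex combination of the conditional
   probabilities Pr[A | B_i, X], up to an error delta) then yields, for every large
   n in S, some i <= K with Pr[A | B_i, X] > alpha - eps; since only the K + 1
   values of i occur, one of them works for infinitely many n in S. *)

section \<open>G(n,p) as a finite probability space\<close>

lemma finite_all_edges: "finite (all_edges n)"
proof -
  have "all_edges n \<subseteq> Pow {1..n}" unfolding all_edges_def by auto
  thus ?thesis by (rule finite_subset) auto
qed

lemma finite_graphs: "finite (graphs n)"
  unfolding graphs_def using finite_all_edges by simp

text \<open>The binomial weights of all subsets of a finite set sum to one, i.e.
  (p + (1 - p)) ^ card V = 1 expanded over subsets.\<close>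
lemma binomial_weights_sum_one:
  fixes p :: real assumes "finite V"
  shows "(\<Sum>G\<in>Pow V. p ^ card G * (1 - p) ^ (card V - card G)) = 1"
proof -
  have "(\<Prod>x\<in>V. p + (1 - p)) = (\<Sum>G\<in>Pow V. (\<Prod>x\<in>G. p) * (\<Prod>x\<in>V - G. 1 - p))"
    by (rule prod_add[OF assms])
  also have "\<dots> = (\<Sum>G\<in>Pow V. p ^ card G * (1 - p) ^ (card V - card G))"
  proof (rule sum.cong)
    fix G assume "G \<in> Pow V"
    hence "card (V - G) = card V - card G"
      using assms by (simp add: card_Diff_subset finite_subset)
    thus "(\<Prod>x\<in>G. p) * (\<Prod>x\<in>V - G. 1 - p) = p ^ card G * (1 - p) ^ (card V - card G)"
      by simp
  qed simp
  finally show ?thesis by simp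
qed

lemma gnp_prob_nonneg: "0 \<le> (p::real) \<Longrightarrow> p \<le> 1 \<Longrightarrow> 0 \<le> gnp_prob n p Ev"
  unfolding gnp_prob_def by (intro sum_nonneg) simp

text \<open>Monotonicity; only the part of an event consisting of graphs on {1..n} matters.\<close>
lemma gnp_prob_mono:
  assumes "0 \<le> (p::real)" "p \<le> 1" "graphs n \<inter> Ev \<subseteq> Ev'"
  shows "gnp_prob n p Ev \<le> gnp_prob n p Ev'"
  unfolding gnp_prob_def using assms by (intro sum_mono2) (auto simp: finite_graphs)

lemma gnp_prob_split: "gnp_prob n p Ev = gnp_prob n p (Ev \<inter> C) + gnp_prob n p (Ev - C)"
proof -
  have "graphs n \<inter> Ev = (graphs n \<inter> (Ev \<inter> C)) \<union> (graphs n \<inter> (Ev - C))" by auto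
  moreover have "(graphs n \<inter> (Ev \<inter> C)) \<inter> (graphs n \<inter> (Ev - C)) = {}" by auto
  ultimately show ?thesis unfolding gnp_prob_def
    by (simp add: sum.union_disjoint finite_graphs)
qed

lemma gnp_prob_union_le:
  assumes "0 \<le> (p::real)" "p \<le> 1"
  shows "gnp_prob n p (Ev1 \<union> Ev2) \<le> gnp_prob n p Ev1 + gnp_prob n p Ev2"
proof -
  have "gnp_prob n p (Ev1 \<union> Ev2) = gnp_prob n p Ev1 + gnp_prob n p (Ev2 - Ev1)"
    using gnp_prob_split[of n p "Ev1 \<union> Ev2" Ev1] by (simp add: Int_absorb2 Un_Diff)
  also have "\<dots> \<le> gnp_prob n p Ev1 + gnp_prob n p Ev2"
    using gnp_prob_mono[OF assms, of n "Ev2 - Ev1" Ev2] by auto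
  finally show ?thesis .
qed

lemma gnp_prob_UN_le:
  assumes "0 \<le> (p::real)" "p \<le> 1" "finite I"
  shows "gnp_prob n p (\<Union>i\<in>I. Ev i) \<le> (\<Sum>i\<in>I. gnp_prob n p (Ev i))"
  using assms(3)
proof (induction I rule: finite_induct)
  case empty
  then show ?case by (simp add: gnp_prob_def)
next
  case (insert x F)
  then show ?case using gnp_prob_union_le[OF assms(1,2), of n "Ev x" "\<Union>i\<in>F. Ev i"] by simp
qed

lemma gnp_prob_contains:
  fixes p :: real assumes F: "F \<subseteq> all_edges n"
  shows "gnp_prob n p {E. F \<subseteq> E} = p ^ card F"
proof -
  define U where "U = all_edges n"
  have fU: "finite U" unfolding U_def by (rule finite_all_edges)
  have fF: "finite F" using F fU finite_subset unfolding U_def by blast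
  have img: "graphs n \<inter> {E. F \<subseteq> E} = (\<lambda>G. F \<union> G) ` Pow (U - F)"
  proof
    show "graphs n \<inter> {E. F \<subseteq> E} \<subseteq> (\<lambda>G. F \<union> G) ` Pow (U - F)"
    proof
      fix E assume "E \<in> graphs n \<inter> {E. F \<subseteq> E}"
      hence "E = F \<union> (E - F)" "E - F \<in> Pow (U - F)" unfolding graphs_def U_def by auto
      thus "E \<in> (\<lambda>G. F \<union> G) ` Pow (U - F)" by blast
    qed
    show "(\<lambda>G. F \<union> G) ` Pow (U - F) \<subseteq> graphs n \<inter> {E. F \<subseteq> E}"
      using F unfolding graphs_def U_def by auto
  qed
  have inj: "inj_on (\<lambda>G. F \<union> G) (Pow (U - F))" by (rule inj_onI) auto
  have "gnp_prob n p {E. F \<subseteq> E}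
      = (\<Sum>G\<in>Pow (U - F). p ^ card (F \<union> G) * (1 - p) ^ (card U - card (F \<union> G)))"
    unfolding gnp_prob_def img U_def[symmetric] by (simp add: sum.reindex[OF inj])
  also have "\<dots> = (\<Sum>G\<in>Pow (U - F). p ^ card F * (p ^ card G * (1 - p) ^ (card (U - F) - card G)))"
  proof (rule sum.cong)
    fix G assume "G \<in> Pow (U - F)"
    hence G: "G \<subseteq> U - F" by auto
    have fG: "finite G" using G fU finite_subset by blast
    have card_FG: "card (F \<union> G) = card F + card G"
      using G fF fG by (subst card_Un_disjoint) auto
    have "card (F \<union> G) \<le> card U" using G F fU unfolding U_def by (intro card_mono) auto
    moreover have "card (U - F) = card U - card F"
      using F fF unfolding U_def by (simp add: card_Diff_subset)
    ultimately have "card U - card (F \<union> G) = card (U - F) - card G" using card_FG by simp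
    thus "p ^ card (F \<union> G) * (1 - p) ^ (card U - card (F \<union> G)) =
          p ^ card F * (p ^ card G * (1 - p) ^ (card (U - F) - card G))"
      using card_FG by (simp add: power_add)
  qed simp
  also have "\<dots> = p ^ card F"
    using binomial_weights_sum_one[of "U - F" p] fU by (simp add: sum_distrib_left[symmetric])
  finally show ?thesis .
qed

lemma gnp_prob_contains_le:
  fixes p :: real assumes "0 \<le> p"
  shows "gnp_prob n p {E. F \<subseteq> E} \<le> p ^ card F"
proof (cases "F \<subseteq> all_edges n")
  case True
  then show ?thesis by (simp add: gnp_prob_contains)
next
  case False
  hence "graphs n \<inter> {E. F \<subseteq> E} = {}" unfolding graphs_def by auto
  thus ?thesis using assms unfolding gnp_prob_def by simp
qed

section \<open>Crossing edges and the events Thin and Good\<close>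

definition cross_edges :: "nat \<Rightarrow> nat \<Rightarrow> nat set set" where
  "cross_edges n r = {e. \<exists>u v. e = {u, v} \<and> u \<in> {1..r} \<and> v \<in> {r+1..n}}"

lemma cross_edges_image: "cross_edges n r = (\<lambda>(u, v). {u, v}) ` ({1..r} \<times> {r+1..n})"
  unfolding cross_edges_def by fastforce

lemma finite_cross_edges: "finite (cross_edges n r)"
  unfolding cross_edges_image by simp

lemma card_cross_edges_le: "card (cross_edges n r) \<le> r * n"
proof -
  have "card (cross_edges n r) \<le> card ({1..r} \<times> {r+1..n})"
    unfolding cross_edges_image by (rule card_image_le) simp
  also have "\<dots> \<le> r * n" by (simp add: card_cartesian_product)
  finally show ?thesis .
qed

definition Thin :: "nat \<Rightarrow> nat \<Rightarrow> nat set set set" where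
  "Thin n r = {E \<in> graphs n. (\<forall>u \<in> {1..r}. \<forall>v \<in> {1..r}. {u, v} \<notin> E)
    \<and> (\<forall>v \<in> {r+1..n}. card {u \<in> {1..r}. {u, v} \<in> E} \<le> 1)}"

definition Good :: "nat \<Rightarrow> nat \<Rightarrow> nat \<Rightarrow> nat set set set" where
  "Good n r K = {E \<in> Thin n r. card (E \<inter> cross_edges n r) \<le> K}"

lemma B_event_Thin: "B_event n r i = {E \<in> Thin n r. card (E \<inter> cross_edges n r) = i}"
proof -
  have "\<And>E. {e \<in> E. \<exists>u v. e = {u, v} \<and> u \<in> {1..r} \<and> v \<in> {r+1..n}} = E \<inter> cross_edges n r"
    unfolding cross_edges_def by auto
  thus ?thesis unfolding B_event_def Thin_def by auto
qed

lemma gnp_prob_Good_decomp: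
  "gnp_prob n p (C \<inter> Good n r K) = (\<Sum>i\<le>K. gnp_prob n p (C \<inter> B_event n r i))"
proof -
  define w where "w E = p ^ card E * (1 - p) ^ (card (all_edges n) - card E)" for E :: "nat set set"
  define G where "G = graphs n \<inter> (C \<inter> Good n r K)"
  have "(\<lambda>E. card (E \<inter> cross_edges n r)) ` G \<subseteq> {..K}" unfolding G_def Good_def by auto
  hence "(\<Sum>i\<le>K. sum w {E \<in> G. card (E \<inter> cross_edges n r) = i}) = sum w G"
    by (intro sum.group) (simp_all add: G_def finite_graphs)
  moreover have "{E \<in> G. card (E \<inter> cross_edges n r) = i} = graphs n \<inter> (C \<inter> B_event n r i)"
    if "i \<le> K" for i
    using that unfolding G_def Good_def B_event_Thin by auto
  ultimately show ?thesis unfolding gnp_prob_def w_def[symmetric] G_def[symmetric] by simp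
qed

section \<open>The probability of not being Good\<close>

text \<open>Markov's inequality for the number of crossing edges, whose expectation is at
  most r n p.\<close>
lemma gnp_prob_many_cross_edges:
  fixes p :: real assumes p: "0 \<le> p" "p \<le> 1"
  shows "gnp_prob n p {E. card (E \<inter> cross_edges n r) > K} \<le> real r * real n * p / (real K + 1)"
proof -
  define C where "C = cross_edges n r"
  define w where "w E = p ^ card E * (1 - p) ^ (card (all_edges n) - card E)" for E :: "nat set set"
  have w_nonneg: "0 \<le> w E" for E unfolding w_def using p by simp
  have count: "w E * real (card (E \<inter> C)) = (\<Sum>e\<in>C. if e \<in> E then w E else 0)" for E
  proof -
    have "real (card (E \<inter> C)) = (\<Sum>e\<in>C. if e \<in> E then 1 else 0)"
      using finite_cross_edges[of n r] by (simp add: C_def sum.If_cases Int_commute Int_def)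
    thus ?thesis by (simp add: sum_distrib_left if_distrib cong: if_cong)
  qed
  have "(real K + 1) * gnp_prob n p {E. card (E \<inter> C) > K}
      = (\<Sum>E\<in>graphs n \<inter> {E. card (E \<inter> C) > K}. w E * (real K + 1))"
    unfolding gnp_prob_def w_def by (simp add: sum_distrib_left mult.commute)
  also have "\<dots> \<le> (\<Sum>E\<in>graphs n \<inter> {E. card (E \<inter> C) > K}. w E * real (card (E \<inter> C)))"
    by (intro sum_mono mult_left_mono w_nonneg) auto
  also have "\<dots> \<le> (\<Sum>E\<in>graphs n. w E * real (card (E \<inter> C)))"
    by (intro sum_mono2 finite_graphs) (auto intro: w_nonneg mult_nonneg_nonneg)
  also have "\<dots> = (\<Sum>e\<in>C. \<Sum>E\<in>graphs n. if e \<in> E then w E else 0)"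
    unfolding count by (rule sum.swap)
  also have "\<dots> = (\<Sum>e\<in>C. gnp_prob n p {E. {e} \<subseteq> E})"
    unfolding gnp_prob_def w_def using finite_graphs[of n] by (simp add: sum.inter_filter Int_def)
  also have "\<dots> \<le> (\<Sum>e\<in>C. p)"
    using gnp_prob_contains_le[OF p(1), of n "{_}"] by (intro sum_mono) simp
  also have "\<dots> \<le> real r * real n * p"
    using card_cross_edges_le[of n r] p unfolding C_def
    by (simp add: mult_right_mono of_nat_mult[symmetric] del: of_nat_mult)
  finally show ?thesis unfolding C_def by (simp add: field_simps)
qed

lemma not_Thin_cases:
  assumes "E \<in> graphs n - Thin n r"
  obtains u v where "u \<in> {1..r}" "v \<in> {1..r}" "{u, v} \<in> E"
    | u w v where "u \<in> {1..r}" "w \<in> {1..r}" "u \<noteq> w" "v \<in> {r+1..n}" "{{u, v}, {w, v}} \<subseteq> E"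
proof (cases "\<exists>u \<in> {1..r}. \<exists>v \<in> {1..r}. {u, v} \<in> E")
  case True
  then show ?thesis using that(1) by blast
next
  case False
  with assms obtain v where v: "v \<in> {r+1..n}" "\<not> card {u \<in> {1..r}. {u, v} \<in> E} \<le> 1"
    unfolding Thin_def by auto
  then obtain u w where "u \<in> {1..r}" "{u, v} \<in> E" "w \<in> {1..r}" "{w, v} \<in> E" "u \<noteq> w"
    by (auto simp: card_le_Suc0_iff_eq[simplified])
  then show ?thesis using that(2) v(1) by blast
qed

text \<open>Union bound over the r^2 inner pairs and the at most r^2 n "cherries".\<close>
lemma gnp_prob_not_Thin:
  fixes p :: real assumes p: "0 \<le> p" "p \<le> 1"
  shows "gnp_prob n p (graphs n - Thin n r) \<le> real r * real r * p + real r * real r * real n * p^2"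
proof -
  define I where "I = {1..r} \<times> {1..r}"
  define T where "T = {(u, w, v). u \<in> {1..r} \<and> w \<in> {1..r} \<and> u \<noteq> w \<and> v \<in> {r+1..n}}"
  define inner_edge :: "nat \<times> nat \<Rightarrow> nat set set set" where "inner_edge = (\<lambda>(u, v). {E. {{u, v}} \<subseteq> E})"
  define cherry :: "nat \<times> nat \<times> nat \<Rightarrow> nat set set set" where "cherry = (\<lambda>(u, w, v). {E. {{u, v}, {w, v}} \<subseteq> E})"
  have T_sub: "T \<subseteq> {1..r} \<times> {1..r} \<times> {r+1..n}" unfolding T_def by auto
  hence finite_T: "finite T" by (rule finite_subset) simp
  have "card T \<le> r * (r * (n - r))"
    using card_mono[OF _ T_sub] by (simp add: card_cartesian_product)
  also have "\<dots> \<le> r * (r * n)" by (intro mult_le_mono2) simp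
  finally have card_T: "card T \<le> r * r * n" by (simp add: mult.assoc)
  have cover: "graphs n - Thin n r \<subseteq> (\<Union>x\<in>I. inner_edge x) \<union> (\<Union>x\<in>T. cherry x)"
  proof
    fix E assume "E \<in> graphs n - Thin n r"
    then show "E \<in> (\<Union>x\<in>I. inner_edge x) \<union> (\<Union>x\<in>T. cherry x)"
    proof (cases rule: not_Thin_cases)
      case (1 u v)
      then have "(u, v) \<in> I" "E \<in> inner_edge (u, v)" by (auto simp: I_def inner_edge_def)
      then show ?thesis by blast
    next
      case (2 u w v)
      then have "(u, w, v) \<in> T" "E \<in> cherry (u, w, v)" by (auto simp: T_def cherry_def)
      then show ?thesis by blast
    qed
  qed
  have "gnp_prob n p (graphs n - Thin n r)
      \<le> gnp_prob n p ((\<Union>x\<in>I. inner_edge x) \<union> (\<Union>x\<in>T. cherry x))"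
    using cover by (intro gnp_prob_mono[OF p]) auto
  also have "\<dots> \<le> gnp_prob n p (\<Union>x\<in>I. inner_edge x) + gnp_prob n p (\<Union>x\<in>T. cherry x)"
    by (rule gnp_prob_union_le[OF p])
  also have "gnp_prob n p (\<Union>x\<in>I. inner_edge x) \<le> real r * real r * p"
  proof -
    have "gnp_prob n p (\<Union>x\<in>I. inner_edge x) \<le> (\<Sum>x\<in>I. gnp_prob n p (inner_edge x))"
      by (rule gnp_prob_UN_le[OF p]) (simp add: I_def)
    also have "\<dots> \<le> (\<Sum>x\<in>I. p)"
      using gnp_prob_contains_le[OF p(1), of n "{_}"]
      by (intro sum_mono) (auto simp: inner_edge_def)
    also have "\<dots> = real r * real r * p" by (simp add: I_def card_cartesian_product)
    finally show ?thesis .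
  qed
  also have "gnp_prob n p (\<Union>x\<in>T. cherry x) \<le> real r * real r * real n * p^2"
  proof -
    have "gnp_prob n p (\<Union>x\<in>T. cherry x) \<le> (\<Sum>x\<in>T. gnp_prob n p (cherry x))"
      by (rule gnp_prob_UN_le[OF p finite_T])
    also have "\<dots> \<le> (\<Sum>x\<in>T. p^2)"
    proof (rule sum_mono)
      fix x assume "x \<in> T"
      then obtain u w v where x: "x = (u, w, v)" "u \<noteq> w" unfolding T_def by auto
      hence "card {{u, v}, {w, v}} = 2" by (auto simp: doubleton_eq_iff)
      thus "gnp_prob n p (cherry x) \<le> p^2"
        using gnp_prob_contains_le[OF p(1), of n "{{u, v}, {w, v}}"] x by (simp add: cherry_def)
    qed
    also have "\<dots> \<le> real r * real r * real n * p^2"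
      using card_T p by (simp add: mult_right_mono of_nat_mult[symmetric] del: of_nat_mult)
    finally show ?thesis .
  qed
  finally show ?thesis by simp
qed

lemma gnp_prob_not_Good:
  fixes p :: real assumes p: "0 \<le> p" "p \<le> 1"
  shows "gnp_prob n p (graphs n - Good n r K)
    \<le> real r * real r * p + real r * real r * real n * p^2 + real r * real n * p / (real K + 1)"
proof -
  have "gnp_prob n p (graphs n - Good n r K)
      \<le> gnp_prob n p ((graphs n - Thin n r) \<union> {E. card (E \<inter> cross_edges n r) > K})"
    by (intro gnp_prob_mono[OF p]) (auto simp: Good_def)
  also have "\<dots> \<le> gnp_prob n p (graphs n - Thin n r) + gnp_prob n p {E. card (E \<inter> cross_edges n r) > K}"
    by (rule gnp_prob_union_le[OF p])
  finally show ?thesis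
    using gnp_prob_not_Thin[OF p, of n r] gnp_prob_many_cross_edges[OF p, where n = n and r = r and K = K] by linarith
qed

lemma gnp_prob_not_Good_sparse:
  fixes p c :: real assumes p: "0 \<le> p" "p \<le> 1" and n: "n > 0" and pc: "p \<le> c / real n"
  shows "gnp_prob n p (graphs n - Good n r K)
    \<le> real r * real r * (c + c^2) / real n + real r * c / (real K + 1)"
proof -
  have np: "real n * p \<le> c" using pc n by (simp add: field_simps)
  have "0 \<le> real n * p" using p by simp
  hence "0 \<le> c" using np by linarith
  have "real r * real r * p \<le> real r * real r * c / real n"
    using mult_left_mono[OF pc, of "real r * real r"] by simp
  moreover have "real r * real r * real n * p^2 \<le> real r * real r * c^2 / real n"
  proof -
    have "real n * p^2 = (real n * p) * p" by (simp add: power2_eq_square)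
    also have "\<dots> \<le> c * (c / real n)" using np pc p \<open>0 \<le> c\<close> by (intro mult_mono) auto
    finally have np2: "real n * p^2 \<le> c^2 / real n" by (simp add: power2_eq_square)
    show ?thesis using mult_left_mono[OF np2, of "real r * real r"] by (simp add: mult.assoc)
  qed
  moreover have "real r * real n * p / (real K + 1) \<le> real r * c / (real K + 1)"
    using mult_left_mono[OF np, of "real r"] by (simp add: divide_right_mono mult.assoc)
  ultimately show ?thesis
    using gnp_prob_not_Good[OF p, of n r K] by (simp add: add_divide_distrib distrib_left)
qed

lemma eventually_Good_likely:
  fixes p :: "nat \<Rightarrow> real" and c \<delta> :: real
  assumes p: "\<And>n. 0 \<le> p n \<and> p n \<le> 1" and c: "c > 0" and \<delta>: "\<delta> > 0"
    and sparse: "\<forall>\<^sub>F n in sequentially. p n \<le> c / real n"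
  obtains K where "\<forall>\<^sub>F n in sequentially. gnp_prob n (p n) (graphs n - Good n r K) < \<delta>"
proof -
  obtain K :: nat where K: "2 * real r * c / \<delta> < real K"
    using reals_Archimedean2 by blast
  have tail: "real r * c / (real K + 1) < \<delta> / 2"
    using K \<delta> c by (simp add: field_simps)
  have "\<forall>\<^sub>F n in sequentially. real r * real r * (c + c^2) / real n < \<delta> / 2"
    using \<delta> by (intro order_tendstoD(2)[OF lim_const_over_n]) simp
  with sparse eventually_gt_at_top[of 0]
  have "\<forall>\<^sub>F n in sequentially. gnp_prob n (p n) (graphs n - Good n r K) < \<delta>"
  proof eventually_elim
    case (elim n)
    then show ?case
      using gnp_prob_not_Good_sparse[of "p n" n c r K] p[of n] tail by linarith
  qed
  then show ?thesis by (rule that)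
qed

section \<open>Averaging\<close>

lemma averaging_cell:
  fixes a x :: "nat \<Rightarrow> real" and a' x' d \<alpha> \<beta> \<epsilon> :: real
  assumes "finite I" and "\<epsilon> > 0"
    and cells: "\<And>i. i \<in> I \<Longrightarrow> 0 \<le> a i \<and> a i \<le> x i"
    and rest: "0 \<le> x'" "a' \<le> d" "x' \<le> d"
    and total: "(\<Sum>i\<in>I. x i) + x' > \<beta>"
    and ratio: "(\<Sum>i\<in>I. a i) + a' > \<alpha> * ((\<Sum>i\<in>I. x i) + x')"
    and small: "(1 + \<bar>\<alpha> - \<epsilon>\<bar>) * d \<le> \<epsilon> * \<beta>"
  shows "\<exists>i\<in>I. x i > 0 \<and> a i / x i > \<alpha> - \<epsilon>"
proof (rule ccontr)
  assume no_cell: "\<not> ?thesis"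
  have "a i \<le> (\<alpha> - \<epsilon>) * x i" if "i \<in> I" for i
  proof (cases "x i > 0")
    case True
    with no_cell that have "a i / x i \<le> \<alpha> - \<epsilon>" by auto
    with True show ?thesis by (simp add: pos_divide_le_eq mult.commute)
  next
    case False
    with cells[OF that] have "a i = 0" "x i = 0" by auto
    then show ?thesis by simp
  qed
  hence "(\<Sum>i\<in>I. a i) \<le> (\<alpha> - \<epsilon>) * (\<Sum>i\<in>I. x i)"
    by (simp add: sum_distrib_left sum_mono)
  moreover have "- ((\<alpha> - \<epsilon>) * x') \<le> \<bar>\<alpha> - \<epsilon>\<bar> * d"
  proof -
    have "- ((\<alpha> - \<epsilon>) * x') \<le> \<bar>\<alpha> - \<epsilon>\<bar> * x'"
      using mult_right_mono[OF abs_ge_minus_self rest(1), of "\<alpha> - \<epsilon>"] by (simp add: algebra_simps)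
    also have "\<dots> \<le> \<bar>\<alpha> - \<epsilon>\<bar> * d" using rest(3) by (intro mult_left_mono) auto
    finally show ?thesis .
  qed
  ultimately have "\<epsilon> * ((\<Sum>i\<in>I. x i) + x') < (1 + \<bar>\<alpha> - \<epsilon>\<bar>) * d"
    using ratio rest by (simp add: algebra_simps)
  also have "\<dots> \<le> \<epsilon> * \<beta>" by (rule small)
  finally show False using total \<open>\<epsilon> > 0\<close> by simp
qed

lemma good_B_event_exists:
  fixes q \<alpha> \<beta> \<epsilon> :: real
  assumes q: "0 \<le> q" "q \<le> 1" and "\<epsilon> > 0"
    and X: "gnp_prob n q X > \<beta>" and AX: "gnp_cond n q A X > \<alpha>"
    and bad: "gnp_prob n q (graphs n - Good n r K) < \<epsilon> * \<beta> / (1 + \<bar>\<alpha> - \<epsilon>\<bar>)"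
  shows "\<exists>i\<le>K. gnp_prob n q (B_event n r i \<inter> X) > 0 \<and>
           gnp_cond n q A (B_event n r i \<inter> X) > \<alpha> - \<epsilon>"
proof -
  let ?P = "gnp_prob n q" and ?bad = "graphs n - Good n r K"
  have "1 + \<bar>\<alpha> - \<epsilon>\<bar> > 0" by (simp add: add_pos_nonneg)
  with bad have small: "(1 + \<bar>\<alpha> - \<epsilon>\<bar>) * ?P ?bad \<le> \<epsilon> * \<beta>"
    by (simp add: pos_less_divide_eq mult.commute)
  have cell_eq: "A \<inter> X \<inter> B_event n r i = A \<inter> (B_event n r i \<inter> X)"
    "X \<inter> B_event n r i = B_event n r i \<inter> X" for i by auto
  have "\<exists>i\<in>{..K}. ?P (X \<inter> B_event n r i) > 0 \<and>
      ?P (A \<inter> X \<inter> B_event n r i) / ?P (X \<inter> B_event n r i) > \<alpha> - \<epsilon>"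
  proof (rule averaging_cell[where a' = "?P (A \<inter> X - Good n r K)"
        and x' = "?P (X - Good n r K)" and d = "?P ?bad"])
    show "0 \<le> ?P (A \<inter> X \<inter> B_event n r i) \<and> ?P (A \<inter> X \<inter> B_event n r i) \<le> ?P (X \<inter> B_event n r i)"
      for i using q by (auto intro: gnp_prob_nonneg gnp_prob_mono)
    show "0 \<le> ?P (X - Good n r K)" using q by (rule gnp_prob_nonneg)
    show "?P (A \<inter> X - Good n r K) \<le> ?P ?bad" "?P (X - Good n r K) \<le> ?P ?bad"
      using q by (auto intro: gnp_prob_mono)
    have X_split: "?P X = (\<Sum>i\<le>K. ?P (X \<inter> B_event n r i)) + ?P (X - Good n r K)"
      using gnp_prob_split[of n q X "Good n r K"] gnp_prob_Good_decomp[of n q X] by simp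
    have AX_split: "?P (A \<inter> X) = (\<Sum>i\<le>K. ?P (A \<inter> X \<inter> B_event n r i)) + ?P (A \<inter> X - Good n r K)"
      using gnp_prob_split[of n q "A \<inter> X" "Good n r K"] gnp_prob_Good_decomp[of n q "A \<inter> X"] by simp
    show "(\<Sum>i\<in>{..K}. ?P (X \<inter> B_event n r i)) + ?P (X - Good n r K) > \<beta>"
      using X X_split by simp
    have "0 \<le> (1 + \<bar>\<alpha> - \<epsilon>\<bar>) * ?P ?bad"
      by (intro mult_nonneg_nonneg gnp_prob_nonneg[OF q]) simp
    with small have "0 \<le> \<epsilon> * \<beta>" by linarith
    with \<open>\<epsilon> > 0\<close> have "0 \<le> \<beta>" by (simp add: zero_le_mult_iff)
    with X have "?P X > 0" by simp
    then have "?P (A \<inter> X) > \<alpha> * ?P X"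
      using AX by (simp add: gnp_cond_def Int_commute field_simps)
    then show "(\<Sum>i\<in>{..K}. ?P (A \<inter> X \<inter> B_event n r i)) + ?P (A \<inter> X - Good n r K)
        > \<alpha> * ((\<Sum>i\<in>{..K}. ?P (X \<inter> B_event n r i)) + ?P (X - Good n r K))"
      using X_split AX_split by simp
  qed (use small \<open>\<epsilon> > 0\<close> in auto)
  then show ?thesis unfolding gnp_cond_def cell_eq by auto
qed

theorem mainTheorem3:
  fixes \<alpha> \<beta> \<epsilon> :: real and r :: nat and S :: "nat set"
    and A X :: "nat \<Rightarrow> nat set set set" and p :: "nat \<Rightarrow> real"
  assumes "\<alpha> > 0" "\<beta> > 0" "\<epsilon> > 0"
    and "infinite S"
    and "\<And>n. 0 \<le> p n \<and> p n \<le> 1"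
    and "\<exists>c1 c2. c1 > 0 \<and> c2 > 0 \<and>
           (\<forall>\<^sub>F n in sequentially. c1 / real n \<le> p n \<and> p n \<le> c2 / real n)"
    and "\<And>n. n \<in> S \<Longrightarrow> gnp_prob n (p n) (X n) > \<beta>"
    and "\<And>n. n \<in> S \<Longrightarrow> gnp_cond n (p n) (A n) (X n) > \<alpha>"
  shows "\<exists>i::nat. infinite {n \<in> S.
            gnp_prob n (p n) (B_event n r i \<inter> X n) > 0 \<and>
            gnp_cond n (p n) (A n) (B_event n r i \<inter> X n) > \<alpha> - \<epsilon>}"
proof -
  define good where "good i = {n \<in> S. gnp_prob n (p n) (B_event n r i \<inter> X n) > 0 \<and>
            gnp_cond n (p n) (A n) (B_event n r i \<inter> X n) > \<alpha> - \<epsilon>}" for i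
  define \<delta> where "\<delta> = \<epsilon> * \<beta> / (1 + \<bar>\<alpha> - \<epsilon>\<bar>)"
  have \<delta>: "\<delta> > 0" unfolding \<delta>_def using assms(2,3) by (simp add: add_pos_nonneg)
  \<comment> \<open>Only the upper bound p(n) = O(1/n) is needed.\<close>
  obtain c1 c where c: "c > 0"
    and bounds: "\<forall>\<^sub>F n in sequentially. c1 / real n \<le> p n \<and> p n \<le> c / real n"
    using assms(6) by blast
  have sparse: "\<forall>\<^sub>F n in sequentially. p n \<le> c / real n"
    using bounds by (rule eventually_mono) simp
  obtain K N where K: "\<And>n. n \<ge> N \<Longrightarrow> gnp_prob n (p n) (graphs n - Good n r K) < \<delta>"
    using eventually_Good_likely[OF assms(5) c \<delta> sparse] unfolding eventually_sequentially by metis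
  have "S - {..<N} \<subseteq> (\<Union>i\<le>K. good i)"
  proof
    fix n assume n: "n \<in> S - {..<N}"
    then have "gnp_prob n (p n) (graphs n - Good n r K) < \<epsilon> * \<beta> / (1 + \<bar>\<alpha> - \<epsilon>\<bar>)"
      using K[of n] unfolding \<delta>_def by simp
    then show "n \<in> (\<Union>i\<le>K. good i)"
      using good_B_event_exists[where q = "p n" and X = "X n" and A = "A n" and \<alpha> = \<alpha> and \<beta> = \<beta>
          and \<epsilon> = \<epsilon> and n = n and r = r and K = K] assms(3,5,7,8) n
      unfolding good_def by auto
  qed
  moreover have "infinite (S - {..<N})" using assms(4) by simp
  ultimately have "infinite (\<Union>i\<le>K. good i)" using finite_subset by blast
  then have "\<exists>i. infinite (good i)" by (metis finite_UN_I finite_atMost)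
  then show ?thesis unfolding good_def .
qed

end
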